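(* Let $A$ be an abelian group and $S_1,\ldots,S_k$ a distinct difference system in $A$. For each $i$ and each $z \in S_i$ define $T_{i,z} = \{x - z \mid x \in S_i,\ x \neq z\}$. If $T_{i,z} \cap T_{j,w} \neq \emptyset$, then $i = j$ and $z = w$.
   Context: Subsets $S_1,\ldots,S_k$ of an abelian group $A$ form a distinct difference system if: (i) for any $i,j$ and any $x,y \in S_i$, $z,w \in S_j$ with $x \neq y$ and $z \neq w$, the equation $x-y=z-w$ implies $x=z$ and $y=w$; (ii) each $S_i$ contains $0$ and at least one other element; (iii) $S_i \cap S_j = \{0\}$ for $i \neq j$. *)

theory Defs
  imports Main
begin

definition distinct_difference_system :: "nat \<Rightarrow> (nat \<Rightarrow> 'a::ab_group_add set) \<Rightarrow> bool" where
  "distinct_difference_system k S \<longleftrightarrow>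
     (\<forall>i\<in>{1..k}. \<forall>j\<in>{1..k}. \<forall>x\<in>S i. \<forall>y\<in>S i. \<forall>z\<in>S j. \<forall>w\<in>S j.
        x \<noteq> y \<longrightarrow> z \<noteq> w \<longrightarrow> x - y = z - w \<longrightarrow> x = z \<and> y = w) \<and>
     (\<forall>i\<in>{1..k}. 0 \<in> S i \<and> (\<exists>x\<in>S i. x \<noteq> 0)) \<and>
     (\<forall>i\<in>{1..k}. \<forall>j\<in>{1..k}. i \<noteq> j \<longrightarrow> S i \<inter> S j = {0})"

definition T_set :: "(nat \<Rightarrow> 'a::ab_group_add set) \<Rightarrow> nat \<Rightarrow> 'a \<Rightarrow> 'a set" where
  "T_set S i z = {x - z | x. x \<in> S i \<and> x \<noteq> z}"

end

theory Submission
  imports Defs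
begin

lemma mem_T_set_iff: "d \<in> T_set S i z \<longleftrightarrow> (\<exists>x\<in>S i. x \<noteq> z \<and> d = x - z)"
  unfolding T_set_def by blast

lemma distinct_difference_systemD_diff_eq:
  assumes "distinct_difference_system k S" and "i \<in> {1..k}" and "j \<in> {1..k}"
    and "x \<in> S i" "y \<in> S i" "z \<in> S j" "w \<in> S j"
    and "x \<noteq> y" "z \<noteq> w" "x - y = z - w"
  shows "x = z \<and> y = w"
  using assms unfolding distinct_difference_system_def by blast

lemma distinct_difference_systemD_common_eq_0:
  assumes "distinct_difference_system k S" and "i \<in> {1..k}" and "j \<in> {1..k}" and "i \<noteq> j"
    and "a \<in> S i" "a \<in> S j"
  shows "a = 0"
  using assms unfolding distinct_difference_system_def by blast

theorem lemma3p23: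
  fixes S :: "nat \<Rightarrow> 'a::ab_group_add set" and k i j :: nat and z w :: 'a
  assumes "distinct_difference_system k S"
    and "i \<in> {1..k}" and "j \<in> {1..k}"
    and "z \<in> S i" and "w \<in> S j"
    and "T_set S i z \<inter> T_set S j w \<noteq> {}"
  shows "i = j \<and> z = w"
proof -
  obtain x y where x: "x \<in> S i" "x \<noteq> z" and y: "y \<in> S j" "y \<noteq> w"
    and diff_eq: "x - z = y - w"
    using assms(6) by (auto simp: mem_T_set_iff)
  have "x = y" and "z = w"
    using distinct_difference_systemD_diff_eq[OF assms(1-3) x(1) assms(4) y(1) assms(5) x(2) y(2) diff_eq]
    by auto
  moreover have "i = j"
  proof (rule ccontr)
    assume "i \<noteq> j"
    \<comment> \<open>Then both x = y and z = w lie in S i \<inter> S j = {0}, contradicting x \<noteq> z.\<close>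
    have "x = 0" "z = 0"
      using distinct_difference_systemD_common_eq_0[OF assms(1-3) \<open>i \<noteq> j\<close>]
        x(1) y(1) assms(4,5) \<open>x = y\<close> \<open>z = w\<close> by auto
    with x(2) show False by simp
  qed
  ultimately show ?thesis by simp
qed

end
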